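(* Let $p(z)=z^n+a_nz^{n-1}+\cdots+a_2z+a_1$ be a complex monic polynomial with $n\geq2$ and $a_1\neq0$. If $z\in\mathbb{C}$ is any zero of $p$, then $$|z|\leq\left\{\frac{1}{2}\left(\delta_1+\delta+\sqrt{(\delta_1-\delta)^2+4\delta_2}\right)+1\right\}^{1/8}.$$
   Context: Let $C_p$ be the $n\times n$ matrix whose first row is $(-a_n,-a_{n-1},\dots,-a_2,-a_1)$, whose entries $(k+1,k)$ equal $1$ for $k=1,\dots,n-1$, and whose other entries are $0$. Define numbers $b_j,c_j,d_j$ ($j=1,\dots,n$) by: the first row of $C_p^2$ is $(b_n,b_{n-1},\dots,b_1)$, the first row of $C_p^3$ is $(c_n,\dots,c_1)$, the first row of $C_p^4$ is $(d_n,\dots,d_1)$ (so $b_j=a_na_j-a_{j-1}$, $c_j=-a_nb_j+a_{n-1}a_j-a_{j-2}$ with $a_0=a_{-1}=0$). Set $\alpha=\sum_{j=1}^n|a_j|^2$, $\beta=\sum_{j=1}^n|b_j|^2$, $\gamma=-\sum_{j=1}^n b_j\overline{a_j}$, $\delta=\frac{1}{2}\left(\alpha+\beta+\sqrt{(\alpha-\beta)^2+4|\gamma|^2}\right)$; $\alpha_1=\sum_{j=1}^n|d_j|^2$, $\beta_1=\sum_{j=1}^n|c_j|^2$, $\gamma_1=\sum_{j=1}^n d_j\overline{c_j}$, $\delta_1=\frac12\left(\alpha_1+\beta_1+\sqrt{(\alpha_1-\beta_1)^2+4|\gamma_1|^2}\right)$; $\gamma_2=\sum_{j=1}^n d_j\overline{b_j}$,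 $\gamma_3=\sum_{j=1}^n d_j\overline{a_j}$, $\gamma_4=\sum_{j=1}^n c_j\overline{b_j}$, $\gamma_5=\sum_{j=1}^n c_j\overline{a_j}$, and $\delta_2=\frac12\Big(|\gamma_2|^2+|\gamma_3|^2+|\gamma_4|^2+|\gamma_5|^2+\sqrt{\big((|\gamma_2|^2+|\gamma_3|^2)-(|\gamma_4|^2+|\gamma_5|^2)\big)^2+4|\gamma_2\overline{\gamma_4}+\gamma_3\overline{\gamma_5}|^2}\Big)$. *)

theory Defs
  imports "HOL-Analysis.Analysis"
begin

(* n x n matrices with 1-based indices, represented as functions nat => nat => complex;
   only entries with indices in {1..n} are meaningful. *)

definition companion :: "nat \<Rightarrow> (nat \<Rightarrow> complex) \<Rightarrow> nat \<Rightarrow> nat \<Rightarrow> complex" where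
  "companion n a i k =
     (if i = 1 then - a (n + 1 - k) else if i = k + 1 then 1 else 0)"

definition mmul :: "nat \<Rightarrow> (nat \<Rightarrow> nat \<Rightarrow> complex) \<Rightarrow> (nat \<Rightarrow> nat \<Rightarrow> complex) \<Rightarrow> nat \<Rightarrow> nat \<Rightarrow> complex" where
  "mmul n A B i j = (\<Sum>k=1..n. A i k * B k j)"

fun mpow :: "nat \<Rightarrow> (nat \<Rightarrow> nat \<Rightarrow> complex) \<Rightarrow> nat \<Rightarrow> nat \<Rightarrow> nat \<Rightarrow> complex" where
  "mpow n A 0 = (\<lambda>i j. if i = j then 1 else 0)"
| "mpow n A (Suc m) = mmul n (mpow n A m) A"

(* first row of C_p^m is (x_n, ..., x_1), i.e. x_j = (C_p^m)(1, n+1-j) *)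
definition rowcoef :: "nat \<Rightarrow> (nat \<Rightarrow> complex) \<Rightarrow> nat \<Rightarrow> nat \<Rightarrow> complex" where
  "rowcoef n a m j = mpow n (companion n a) m 1 (n + 1 - j)"

definition bco where "bco n a = rowcoef n a 2"
definition cco where "cco n a = rowcoef n a 3"
definition dco where "dco n a = rowcoef n a 4"

definition alpha :: "nat \<Rightarrow> (nat \<Rightarrow> complex) \<Rightarrow> real" where
  "alpha n a = (\<Sum>j=1..n. (cmod (a j))^2)"
definition beta :: "nat \<Rightarrow> (nat \<Rightarrow> complex) \<Rightarrow> real" where
  "beta n a = (\<Sum>j=1..n. (cmod (bco n a j))^2)"
definition gamma :: "nat \<Rightarrow> (nat \<Rightarrow> complex) \<Rightarrow> complex" where
  "gamma n a = - (\<Sum>j=1..n. bco n a j * cnj (a j))"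
definition delta :: "nat \<Rightarrow> (nat \<Rightarrow> complex) \<Rightarrow> real" where
  "delta n a = (alpha n a + beta n a
      + sqrt ((alpha n a - beta n a)^2 + 4 * (cmod (gamma n a))^2)) / 2"

definition alpha1 :: "nat \<Rightarrow> (nat \<Rightarrow> complex) \<Rightarrow> real" where
  "alpha1 n a = (\<Sum>j=1..n. (cmod (dco n a j))^2)"
definition beta1 :: "nat \<Rightarrow> (nat \<Rightarrow> complex) \<Rightarrow> real" where
  "beta1 n a = (\<Sum>j=1..n. (cmod (cco n a j))^2)"
definition gamma1 :: "nat \<Rightarrow> (nat \<Rightarrow> complex) \<Rightarrow> complex" where
  "gamma1 n a = (\<Sum>j=1..n. dco n a j * cnj (cco n a j))"
definition delta1 :: "nat \<Rightarrow> (nat \<Rightarrow> complex) \<Rightarrow> real" where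
  "delta1 n a = (alpha1 n a + beta1 n a
      + sqrt ((alpha1 n a - beta1 n a)^2 + 4 * (cmod (gamma1 n a))^2)) / 2"

definition gamma2 :: "nat \<Rightarrow> (nat \<Rightarrow> complex) \<Rightarrow> complex" where
  "gamma2 n a = (\<Sum>j=1..n. dco n a j * cnj (bco n a j))"
definition gamma3 :: "nat \<Rightarrow> (nat \<Rightarrow> complex) \<Rightarrow> complex" where
  "gamma3 n a = (\<Sum>j=1..n. dco n a j * cnj (a j))"
definition gamma4 :: "nat \<Rightarrow> (nat \<Rightarrow> complex) \<Rightarrow> complex" where
  "gamma4 n a = (\<Sum>j=1..n. cco n a j * cnj (bco n a j))"
definition gamma5 :: "nat \<Rightarrow> (nat \<Rightarrow> complex) \<Rightarrow> complex" where
  "gamma5 n a = (\<Sum>j=1..n. cco n a j * cnj (a j))"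

definition delta2 :: "nat \<Rightarrow> (nat \<Rightarrow> complex) \<Rightarrow> real" where
  "delta2 n a =
    (let g2 = (cmod (gamma2 n a))^2; g3 = (cmod (gamma3 n a))^2;
         g4 = (cmod (gamma4 n a))^2; g5 = (cmod (gamma5 n a))^2
     in (g2 + g3 + g4 + g5
         + sqrt (((g2 + g3) - (g4 + g5))^2
                 + 4 * (cmod (gamma2 n a * cnj (gamma4 n a) + gamma3 n a * cnj (gamma5 n a)))^2)) / 2)"

end

theory Submission
  imports Defs
begin

text \<open>
  The vector v = (z^(n-1), ..., z, 1) satisfies C_p v = z v, so the first row of C_p^m applied to v
  equals z^(m+n-1). Let M be the 4 x n matrix with rows d, c, b, a (the first rows of C_p^4, C_p^3,
  C_p^2 and, up to sign, C_p) and put w = |z|^2. Then |Mv|^2 = w^n + w^(n+1) + w^(n+2) + w^(n+3),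
  while |v|^2 = 1 + w + ... + w^(n-1). The Gram matrix M M^* consists of 2 x 2 blocks: the diagonal
  ones have largest eigenvalues delta_1 and delta, the off-diagonal one has norm at most
  sqrt delta_2. Hence |Mv|^2 <= R |v|^2 with R the largest eigenvalue of the resulting 2 x 2 majorant,
  and comparing the two geometric sums yields w^4 <= R + 1.
\<close>

text \<open>The largest eigenvalue of the hermitian matrix [[x, c], [cnj c, y]] with |c| = g.\<close>

definition max_eig2 :: "real \<Rightarrow> real \<Rightarrow> real \<Rightarrow> real" where
  "max_eig2 x y g = (x + y + sqrt ((x - y)^2 + 4 * g^2)) / 2"

lemma max_eig2_ge: "max x y \<le> max_eig2 x y g"
proof -
  have "sqrt ((x - y)^2) \<le> sqrt ((x - y)^2 + 4 * g^2)"
    by (rule real_sqrt_le_mono) simp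
  then show ?thesis
    unfolding max_eig2_def by (auto simp: abs_if split: if_splits)
qed

lemma max_eig2_nonneg: "0 \<le> x \<Longrightarrow> 0 \<le> max_eig2 x y g"
  using max_eig2_ge[of x y g] by linarith

lemma max_eig2_commute: "max_eig2 x y g = max_eig2 y x g"
  unfolding max_eig2_def by (simp add: power2_commute add.commute)

text \<open>max_eig2 x y g - x and max_eig2 x y g - y are nonnegative with product g^2.\<close>

lemma quadratic_form_le_max_eig2:
  fixes x y g P Q :: real
  assumes "g \<ge> 0"
  shows "x * P^2 + y * Q^2 + 2 * g * P * Q \<le> max_eig2 x y g * (P^2 + Q^2)"
proof -
  define s where "s = sqrt ((x - y)^2 + 4 * g^2)"
  define \<mu> where "\<mu> = (y - x + s) / 2"
  define \<nu> where "\<nu> = (x - y + s) / 2"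
  have "sqrt ((x - y)^2) \<le> s"
    unfolding s_def by (rule real_sqrt_le_mono) simp
  then have \<mu>\<nu>_nonneg: "\<mu> \<ge> 0" "\<nu> \<ge> 0"
    unfolding \<mu>_def \<nu>_def by auto
  have "s^2 = (x - y)^2 + 4 * g^2"
    unfolding s_def by simp
  then have \<mu>\<nu>: "\<mu> * \<nu> = g^2"
    unfolding \<mu>_def \<nu>_def by (simp add: algebra_simps power2_eq_square)
  have psd: "\<mu> * P^2 + \<nu> * Q^2 - 2 * g * P * Q \<ge> 0"
  proof (cases "\<mu> = 0")
    case True
    then show ?thesis using \<mu>\<nu> assms \<mu>\<nu>_nonneg by simp
  next
    case False
    have "\<mu> * (\<mu> * P^2 + \<nu> * Q^2 - 2 * g * P * Q) = (\<mu> * P - g * Q)^2"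
      using \<mu>\<nu> by (simp add: algebra_simps power2_eq_square)
    then have "\<mu> * (\<mu> * P^2 + \<nu> * Q^2 - 2 * g * P * Q) \<ge> 0"
      by simp
    then show ?thesis
      using False \<mu>\<nu>_nonneg by (simp add: zero_le_mult_iff)
  qed
  have "max_eig2 x y g = x + \<mu>" "max_eig2 x y g = y + \<nu>"
    unfolding max_eig2_def \<mu>_def \<nu>_def s_def by (simp_all add: field_simps)
  then have "max_eig2 x y g * (P^2 + Q^2) = (x + \<mu>) * P^2 + (y + \<nu>) * Q^2"
    by (metis distrib_left mult.commute)
  then show ?thesis using psd by (simp add: algebra_simps)
qed

lemma hermitian_form_le_max_eig2:
  fixes x y :: real and c p q :: complex
  shows "x * (cmod p)^2 + y * (cmod q)^2 + 2 * Re (c * cnj p * q)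
    \<le> max_eig2 x y (cmod c) * ((cmod p)^2 + (cmod q)^2)"
proof -
  have "Re (c * cnj p * q) \<le> cmod c * cmod p * cmod q"
    by (metis complex_Re_le_cmod complex_mod_cnj norm_mult)
  then show ?thesis
    using quadratic_form_le_max_eig2[of "cmod c" x "cmod p" y "cmod q"] by simp
qed

lemma cmod_add_power2: "(cmod (u + v))^2 = (cmod u)^2 + (cmod v)^2 + 2 * Re (u * cnj v)"
  unfolding cmod_power2 by (simp add: power2_eq_square algebra_simps)

lemma sum_cmod_lincomb2_power2:
  fixes r s :: "nat \<Rightarrow> complex"
  shows "(\<Sum>j\<in>I. (cmod (r j * p + s j * q))^2)
    = (\<Sum>j\<in>I. (cmod (r j))^2) * (cmod p)^2 + (\<Sum>j\<in>I. (cmod (s j))^2) * (cmod q)^2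
      + 2 * Re ((\<Sum>j\<in>I. r j * cnj (s j)) * p * cnj q)"
proof -
  have "(\<Sum>j\<in>I. (cmod (r j * p + s j * q))^2) = (\<Sum>j\<in>I. (cmod (r j))^2 * (cmod p)^2
      + (cmod (s j))^2 * (cmod q)^2 + 2 * Re (r j * cnj (s j) * p * cnj q))"
    by (rule sum.cong) (simp_all add: cmod_add_power2 norm_mult power_mult_distrib mult_ac)
  then show ?thesis
    by (simp add: sum.distrib sum_distrib_left sum_distrib_right mult.assoc)
qed

lemma sum_cmod_lincomb2_le:
  fixes r s :: "nat \<Rightarrow> complex"
  shows "(\<Sum>j\<in>I. (cmod (r j * p + s j * q))^2)
    \<le> max_eig2 (\<Sum>j\<in>I. (cmod (r j))^2) (\<Sum>j\<in>I. (cmod (s j))^2) (cmod (\<Sum>j\<in>I. r j * cnj (s j)))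
      * ((cmod p)^2 + (cmod q)^2)"
  using hermitian_form_le_max_eig2[of "\<Sum>j\<in>I. (cmod (r j))^2" "cnj p" "\<Sum>j\<in>I. (cmod (s j))^2" "cnj q"
      "\<Sum>j\<in>I. r j * cnj (s j)"]
  by (simp add: sum_cmod_lincomb2_power2)

lemma power2_add_mult_le:
  fixes a b c d :: real
  shows "(a * b + c * d)^2 \<le> (a^2 + c^2) * (b^2 + d^2)"
proof -
  have "0 \<le> (a * d - b * c)^2"
    by simp
  then show ?thesis
    by (simp add: power2_eq_square algebra_simps)
qed

lemma cross_term_le:
  fixes r1 r2 r3 r4 :: "nat \<Rightarrow> complex" and x1 x2 x3 x4 :: complex and I :: "nat set"
  defines "g2 \<equiv> \<Sum>j\<in>I. r1 j * cnj (r3 j)" and "g3 \<equiv> \<Sum>j\<in>I. r1 j * cnj (r4 j)"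
    and "g4 \<equiv> \<Sum>j\<in>I. r2 j * cnj (r3 j)" and "g5 \<equiv> \<Sum>j\<in>I. r2 j * cnj (r4 j)"
  shows "Re (\<Sum>j\<in>I. (r1 j * cnj x1 + r2 j * cnj x2) * cnj (r3 j * cnj x3 + r4 j * cnj x4))
    \<le> sqrt (max_eig2 ((cmod g2)^2 + (cmod g3)^2) ((cmod g4)^2 + (cmod g5)^2)
                      (cmod (g2 * cnj g4 + g3 * cnj g5)))
       * sqrt ((cmod x1)^2 + (cmod x2)^2) * sqrt ((cmod x3)^2 + (cmod x4)^2)"
    (is "_ \<le> sqrt ?m * sqrt ?s12 * sqrt ?s34")
proof -
  define e1 where "e1 = cnj g2 * x1 + cnj g4 * x2"
  define e2 where "e2 = cnj g3 * x1 + cnj g5 * x2"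
  have sum_eq: "(\<Sum>j\<in>I. (r1 j * cnj x1 + r2 j * cnj x2) * cnj (r3 j * cnj x3 + r4 j * cnj x4))
      = x3 * cnj e1 + x4 * cnj e2"
    unfolding e1_def e2_def g2_def g3_def g4_def g5_def
    by (simp add: sum.distrib sum_distrib_left sum_distrib_right algebra_simps)
  have "cnj g2 * x1 * cnj (cnj g4 * x2) + cnj g3 * x1 * cnj (cnj g5 * x2)
      = cnj ((g2 * cnj g4 + g3 * cnj g5) * cnj x1 * x2)"
    by (simp add: algebra_simps)
  then have "Re (cnj g2 * x1 * cnj (cnj g4 * x2)) + Re (cnj g3 * x1 * cnj (cnj g5 * x2))
      = Re ((g2 * cnj g4 + g3 * cnj g5) * cnj x1 * x2)"
    by (metis cnj.sel(1) plus_complex.sel(1))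
  then have "(cmod e1)^2 + (cmod e2)^2 = ((cmod g2)^2 + (cmod g3)^2) * (cmod x1)^2
      + ((cmod g4)^2 + (cmod g5)^2) * (cmod x2)^2 + 2 * Re ((g2 * cnj g4 + g3 * cnj g5) * cnj x1 * x2)"
    unfolding e1_def e2_def cmod_add_power2 by (simp add: norm_mult power_mult_distrib algebra_simps)
  also have "\<dots> \<le> ?m * ?s12"
    by (rule hermitian_form_le_max_eig2)
  finally have e_bound: "(cmod e1)^2 + (cmod e2)^2 \<le> ?m * ?s12" .
  have "cmod (x3 * cnj e1 + x4 * cnj e2) \<le> cmod x3 * cmod e1 + cmod x4 * cmod e2"
    by (metis complex_mod_cnj norm_mult norm_triangle_ineq)
  also have "\<dots> \<le> sqrt (?s34 * ((cmod e1)^2 + (cmod e2)^2))"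
    by (rule real_le_rsqrt) (rule power2_add_mult_le)
  also have "\<dots> \<le> sqrt (?s34 * (?m * ?s12))"
    using e_bound by (intro real_sqrt_le_mono mult_left_mono) auto
  also have "\<dots> = sqrt ?m * sqrt ?s12 * sqrt ?s34"
    by (simp add: real_sqrt_mult)
  finally show ?thesis
    unfolding sum_eq using complex_Re_le_cmod order_trans by blast
qed

text \<open>Cauchy--Schwarz gives S^2 <= |u|^2 |w|^2 <= |u|^2 L S.\<close>

lemma le_by_cauchy_schwarz:
  fixes u w :: "nat \<Rightarrow> complex" and S L :: real
  assumes S_eq: "complex_of_real S = (\<Sum>j\<in>I. u j * w j)" and "S \<ge> 0" "L \<ge> 0"
    and w_bound: "(\<Sum>j\<in>I. (cmod (w j))^2) \<le> L * S"
  shows "S \<le> L * (\<Sum>j\<in>I. (cmod (u j))^2)"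
proof (cases "S = 0")
  case True
  then show ?thesis using \<open>L \<ge> 0\<close> by (simp add: sum_nonneg)
next
  case False
  have "S = cmod (complex_of_real S)"
    using \<open>S \<ge> 0\<close> by simp
  also have "\<dots> \<le> (\<Sum>j\<in>I. cmod (u j) * cmod (w j))"
    unfolding S_eq by (metis (no_types, lifting) norm_mult norm_sum sum.cong)
  finally have "S^2 \<le> (\<Sum>j\<in>I. cmod (u j) * cmod (w j))^2"
    using \<open>S \<ge> 0\<close> by (intro power_mono) auto
  also have "\<dots> \<le> (\<Sum>j\<in>I. (cmod (u j))^2) * (\<Sum>j\<in>I. (cmod (w j))^2)"
    by (rule Cauchy_Schwarz_ineq_sum)
  also have "\<dots> \<le> (\<Sum>j\<in>I. (cmod (u j))^2) * (L * S)"
    using w_bound by (intro mult_left_mono) (simp_all add: sum_nonneg)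
  finally have "S * S \<le> (L * (\<Sum>j\<in>I. (cmod (u j))^2)) * S"
    by (simp add: power2_eq_square mult_ac)
  then show ?thesis
    using False \<open>S \<ge> 0\<close> by simp
qed

lemma four_rows_bound:
  fixes r1 r2 r3 r4 u :: "nat \<Rightarrow> complex" and I :: "nat set"
  defines "x1 \<equiv> \<Sum>j\<in>I. r1 j * u j" and "x2 \<equiv> \<Sum>j\<in>I. r2 j * u j"
    and "x3 \<equiv> \<Sum>j\<in>I. r3 j * u j" and "x4 \<equiv> \<Sum>j\<in>I. r4 j * u j"
    and "g2 \<equiv> \<Sum>j\<in>I. r1 j * cnj (r3 j)" and "g3 \<equiv> \<Sum>j\<in>I. r1 j * cnj (r4 j)"
    and "g4 \<equiv> \<Sum>j\<in>I. r2 j * cnj (r3 j)" and "g5 \<equiv> \<Sum>j\<in>I. r2 j * cnj (r4 j)"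
  shows "(cmod x1)^2 + (cmod x2)^2 + (cmod x3)^2 + (cmod x4)^2 \<le>
     max_eig2
       (max_eig2 (\<Sum>j\<in>I. (cmod (r1 j))^2) (\<Sum>j\<in>I. (cmod (r2 j))^2) (cmod (\<Sum>j\<in>I. r1 j * cnj (r2 j))))
       (max_eig2 (\<Sum>j\<in>I. (cmod (r4 j))^2) (\<Sum>j\<in>I. (cmod (r3 j))^2) (cmod (\<Sum>j\<in>I. r3 j * cnj (r4 j))))
       (sqrt (max_eig2 ((cmod g2)^2 + (cmod g3)^2) ((cmod g4)^2 + (cmod g5)^2)
                       (cmod (g2 * cnj g4 + g3 * cnj g5))))
     * (\<Sum>j\<in>I. (cmod (u j))^2)"
    (is "_ \<le> max_eig2 ?d1 ?d0 (sqrt ?d2) * _")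
proof -
  define s1 where "s1 = (cmod x1)^2 + (cmod x2)^2"
  define s2 where "s2 = (cmod x3)^2 + (cmod x4)^2"
  \<comment> \<open>W12 + W34 is the transposed matrix applied to cnj x, so its inner product with u is |x|^2.\<close>
  define W12 where "W12 j = r1 j * cnj x1 + r2 j * cnj x2" for j
  define W34 where "W34 j = r3 j * cnj x3 + r4 j * cnj x4" for j
  have s_nonneg: "s1 \<ge> 0" "s2 \<ge> 0"
    unfolding s1_def s2_def by simp_all
  have d1_nonneg: "?d1 \<ge> 0"
    by (intro max_eig2_nonneg sum_nonneg) simp
  have d2_nonneg: "?d2 \<ge> 0"
    by (intro max_eig2_nonneg) simp
  have "(\<Sum>j\<in>I. u j * (W12 j + W34 j)) = (\<Sum>j\<in>I. r1 j * u j) * cnj x1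
      + (\<Sum>j\<in>I. r2 j * u j) * cnj x2 + (\<Sum>j\<in>I. r3 j * u j) * cnj x3 + (\<Sum>j\<in>I. r4 j * u j) * cnj x4"
    unfolding W12_def W34_def
    by (simp add: sum.distrib sum_distrib_left sum_distrib_right algebra_simps)
  also have "\<dots> = x1 * cnj x1 + x2 * cnj x2 + x3 * cnj x3 + x4 * cnj x4"
    unfolding x1_def x2_def x3_def x4_def ..
  also have "\<dots> = complex_of_real (s1 + s2)"
    unfolding s1_def s2_def by (simp only: complex_norm_square[symmetric] of_real_add add.assoc)
  finally have S_eq: "complex_of_real (s1 + s2) = (\<Sum>j\<in>I. u j * (W12 j + W34 j))" ..
  have W12_bound: "(\<Sum>j\<in>I. (cmod (W12 j))^2) \<le> ?d1 * s1"
    unfolding W12_def s1_def using sum_cmod_lincomb2_le[of r1 "cnj x1" r2 "cnj x2" I] by simp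
  have W34_bound: "(\<Sum>j\<in>I. (cmod (W34 j))^2) \<le> ?d0 * s2"
    unfolding W34_def s2_def using sum_cmod_lincomb2_le[of r3 "cnj x3" r4 "cnj x4" I]
    by (simp add: max_eig2_commute)
  have cross_bound: "Re (\<Sum>j\<in>I. W12 j * cnj (W34 j)) \<le> sqrt ?d2 * sqrt s1 * sqrt s2"
    unfolding W12_def W34_def s1_def s2_def g2_def g3_def g4_def g5_def by (rule cross_term_le)
  have "(\<Sum>j\<in>I. (cmod (W12 j + W34 j))^2) = (\<Sum>j\<in>I. (cmod (W12 j))^2)
      + (\<Sum>j\<in>I. (cmod (W34 j))^2) + 2 * Re (\<Sum>j\<in>I. W12 j * cnj (W34 j))"
    by (simp add: cmod_add_power2 sum.distrib sum_distrib_left)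
  also have "\<dots> \<le> ?d1 * (sqrt s1)^2 + ?d0 * (sqrt s2)^2 + 2 * sqrt ?d2 * sqrt s1 * sqrt s2"
    using W12_bound W34_bound cross_bound s_nonneg by simp
  also have "\<dots> \<le> max_eig2 ?d1 ?d0 (sqrt ?d2) * ((sqrt s1)^2 + (sqrt s2)^2)"
    using d2_nonneg by (intro quadratic_form_le_max_eig2) simp
  finally have "(\<Sum>j\<in>I. (cmod (W12 j + W34 j))^2) \<le> max_eig2 ?d1 ?d0 (sqrt ?d2) * (s1 + s2)"
    using s_nonneg by simp
  then have "s1 + s2 \<le> max_eig2 ?d1 ?d0 (sqrt ?d2) * (\<Sum>j\<in>I. (cmod (u j))^2)"
    using s_nonneg max_eig2_nonneg[OF d1_nonneg] by (intro le_by_cauchy_schwarz[OF S_eq]) auto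
  then show ?thesis
    unfolding s1_def s2_def by (simp add: add.assoc)
qed

lemma mpow_eigenvector:
  assumes eig: "\<And>l. l \<in> {1..n} \<Longrightarrow> (\<Sum>k=1..n. A l k * v k) = \<mu> * v l"
    and "l \<in> {1..n}"
  shows "(\<Sum>k=1..n. mpow n A m l k * v k) = \<mu> ^ m * v l"
  using \<open>l \<in> {1..n}\<close>
proof (induction m arbitrary: l)
  case 0
  have "(\<Sum>k=1..n. (if l = k then 1 else 0) * v k) = (\<Sum>k=1..n. if l = k then v k else 0)"
    by (rule sum.cong) simp_all
  then show ?case using 0 by simp
next
  case (Suc m)
  have "(\<Sum>k=1..n. mpow n A (Suc m) l k * v k)
      = (\<Sum>p=1..n. mpow n A m l p * (\<Sum>k=1..n. A p k * v k))"
    unfolding mpow.simps mmul_def sum_distrib_right sum_distrib_left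
    by (subst sum.swap) (simp add: mult.assoc)
  also have "\<dots> = (\<Sum>p=1..n. mpow n A m l p * (\<mu> * v p))"
    by (rule sum.cong[OF refl]) (metis eig)
  also have "\<dots> = \<mu> * (\<Sum>p=1..n. mpow n A m l p * v p)"
    by (simp add: sum_distrib_left mult_ac)
  also have "\<dots> = \<mu> ^ Suc m * v l"
    using Suc by simp
  finally show ?case .
qed

lemma companion_eigenvector:
  assumes root: "z ^ n + (\<Sum>j=1..n. a j * z ^ (j - 1)) = 0" and "l \<in> {1..n}"
  shows "(\<Sum>k=1..n. companion n a l k * z ^ (n - k)) = z * z ^ (n - l)"
proof (cases "l = 1")
  case True
  have "(\<Sum>k=1..n. companion n a l k * z ^ (n - k)) = (\<Sum>k=1..n. - a (n + 1 - k) * z ^ (n - k))"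
    using True by (simp add: companion_def)
  also have "\<dots> = (\<Sum>k=1..n. - (a k * z ^ (k - 1)))"
    by (subst sum.atLeastAtMost_rev) (intro sum.cong, auto)
  also have "\<dots> = z ^ n"
    using root by (simp add: sum_negf add_eq_0_iff)
  finally show ?thesis
    using True \<open>l \<in> {1..n}\<close> by (simp add: power_Suc[symmetric])
next
  case False
  then have "l - 1 \<in> {1..n}" and shift: "n - (l - 1) = Suc (n - l)"
    using \<open>l \<in> {1..n}\<close> by auto
  have "(\<Sum>k=1..n. companion n a l k * z ^ (n - k)) = (\<Sum>k=1..n. if k = l - 1 then z ^ (n - k) else 0)"
    using False by (intro sum.cong) (auto simp: companion_def)
  also have "\<dots> = z ^ (n - (l - 1))"
    using \<open>l - 1 \<in> {1..n}\<close> by simp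
  finally show ?thesis
    unfolding shift by simp
qed

lemma first_row_power_sum:
  assumes root: "z ^ n + (\<Sum>j=1..n. a j * z ^ (j - 1)) = 0" and "n \<ge> 1"
  shows "(\<Sum>j=1..n. rowcoef n a m j * z ^ (j - 1)) = z ^ (m + n - 1)"
proof -
  have "(\<Sum>j=1..n. rowcoef n a m j * z ^ (j - 1))
      = (\<Sum>k=1..n. mpow n (companion n a) m 1 k * z ^ (n - k))"
    unfolding rowcoef_def by (subst sum.atLeastAtMost_rev) (intro sum.cong, auto)
  also have "\<dots> = z ^ m * z ^ (n - 1)"
    using \<open>n \<ge> 1\<close> by (intro mpow_eigenvector companion_eigenvector[OF root]) auto
  finally show ?thesis
    using \<open>n \<ge> 1\<close> by (simp add: power_add[symmetric])
qed

lemma delta_eq_max_eig2: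
  "delta n a = max_eig2 (\<Sum>j=1..n. (cmod (a j))^2) (\<Sum>j=1..n. (cmod (bco n a j))^2)
     (cmod (\<Sum>j=1..n. bco n a j * cnj (a j)))"
  unfolding delta_def alpha_def beta_def gamma_def max_eig2_def by simp

lemma delta1_eq_max_eig2:
  "delta1 n a = max_eig2 (\<Sum>j=1..n. (cmod (dco n a j))^2) (\<Sum>j=1..n. (cmod (cco n a j))^2)
     (cmod (\<Sum>j=1..n. dco n a j * cnj (cco n a j)))"
  unfolding delta1_def alpha1_def beta1_def gamma1_def max_eig2_def ..

lemma delta2_eq_max_eig2:
  "delta2 n a = max_eig2 ((cmod (gamma2 n a))^2 + (cmod (gamma3 n a))^2)
     ((cmod (gamma4 n a))^2 + (cmod (gamma5 n a))^2)
     (cmod (gamma2 n a * cnj (gamma4 n a) + gamma3 n a * cnj (gamma5 n a)))"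
  unfolding delta2_def max_eig2_def Let_def by (simp add: add.assoc)

lemma companion_rows_bound:
  fixes u :: "nat \<Rightarrow> complex"
  shows "(cmod (\<Sum>j=1..n. dco n a j * u j))^2 + (cmod (\<Sum>j=1..n. cco n a j * u j))^2
      + (cmod (\<Sum>j=1..n. bco n a j * u j))^2 + (cmod (\<Sum>j=1..n. a j * u j))^2
    \<le> (delta1 n a + delta n a + sqrt ((delta1 n a - delta n a)^2 + 4 * delta2 n a)) / 2
      * (\<Sum>j=1..n. (cmod (u j))^2)"
proof -
  have "delta2 n a \<ge> 0"
    unfolding delta2_eq_max_eig2 by (intro max_eig2_nonneg) simp
  then have "max_eig2 (delta1 n a) (delta n a) (sqrt (delta2 n a))
      = (delta1 n a + delta n a + sqrt ((delta1 n a - delta n a)^2 + 4 * delta2 n a)) / 2"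
    unfolding max_eig2_def by simp
  moreover have "(cmod (\<Sum>j=1..n. dco n a j * u j))^2 + (cmod (\<Sum>j=1..n. cco n a j * u j))^2
      + (cmod (\<Sum>j=1..n. bco n a j * u j))^2 + (cmod (\<Sum>j=1..n. a j * u j))^2
    \<le> max_eig2 (delta1 n a) (delta n a) (sqrt (delta2 n a)) * (\<Sum>j=1..n. (cmod (u j))^2)"
    unfolding delta_eq_max_eig2 delta1_eq_max_eig2 delta2_eq_max_eig2
      gamma2_def gamma3_def gamma4_def gamma5_def
    by (rule four_rows_bound)
  ultimately show ?thesis
    by (simp only:)
qed

lemma power4_le_of_geometric_tail:
  fixes w R :: real
  assumes "w \<ge> 0" "n \<ge> 1"
    and tail: "w ^ n + w ^ (n + 1) + w ^ (n + 2) + w ^ (n + 3) \<le> R * (\<Sum>k<n. w ^ k)"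
  shows "w ^ 4 \<le> R + 1"
proof -
  define U where "U = (\<Sum>k<n. w ^ k)"
  have shift: "(\<Sum>k<m. w ^ (k + 4)) + (1 + w + w^2 + w^3)
      = (\<Sum>k<m. w ^ k) + w^m + w^(m + 1) + w^(m + 2) + w^(m + 3)" for m
    by (induction m) (simp_all add: power_add power2_eq_square power3_eq_cube algebra_simps)
  have "U \<ge> 1"
    unfolding U_def using \<open>n \<ge> 1\<close> \<open>w \<ge> 0\<close>
    by (subst sum.remove[of _ 0]) (auto intro: sum_nonneg)
  have "w ^ 4 * U = (\<Sum>k<n. w ^ (k + 4))"
    unfolding U_def sum_distrib_left by (simp add: power_add mult.commute)
  also have "\<dots> \<le> (\<Sum>k<n. w ^ (k + 4)) + (1 + w + w^2 + w^3)"
    using \<open>w \<ge> 0\<close> by simp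
  also have "\<dots> \<le> (R + 1) * U"
    unfolding shift using tail by (simp add: U_def algebra_simps)
  finally show ?thesis
    using \<open>U \<ge> 1\<close> by simp
qed

lemma le_powr_inverse_of_power_le:
  fixes x y :: real
  assumes "x \<ge> 0" "k > 0" "x ^ k \<le> y"
  shows "x \<le> y powr (1 / k)"
proof (cases "x = 0")
  case False
  then have "x = (x ^ k) powr (1 / k)"
    using assms by (simp add: powr_realpow[symmetric] powr_powr)
  also have "\<dots> \<le> y powr (1 / k)"
    using assms by (intro powr_mono2) simp_all
  finally show ?thesis .
qed simp

theorem mainTheorem14:
  fixes n :: nat and a :: "nat \<Rightarrow> complex" and z :: complex
  assumes "n \<ge> 2" and "a 1 \<noteq> 0"
    and "z ^ n + (\<Sum>j=1..n. a j * z ^ (j - 1)) = 0"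
  shows "cmod z \<le> ((delta1 n a + delta n a
            + sqrt ((delta1 n a - delta n a)^2 + 4 * delta2 n a)) / 2 + 1) powr (1/8)"
proof -
  note root = assms(3)
  have "n \<ge> 1" using assms(1) by simp
  define w where "w = (cmod z)^2"
  define R where "R = (delta1 n a + delta n a + sqrt ((delta1 n a - delta n a)^2 + 4 * delta2 n a)) / 2"
  have norm_power_z: "(cmod (z ^ k))^2 = w ^ k" for k
    unfolding w_def by (simp add: norm_power power_mult[symmetric] mult.commute)
  have row_norm: "(cmod (\<Sum>j=1..n. rowcoef n a m j * z ^ (j - 1)))^2 = w ^ (m + n - 1)" for m
    unfolding first_row_power_sum[OF root \<open>n \<ge> 1\<close>] norm_power_z ..
  have "(\<Sum>j=1..n. a j * z ^ (j - 1)) = - (z ^ n)"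
    using root by (simp add: add_eq_0_iff)
  then have coeff_norm: "(cmod (\<Sum>j=1..n. a j * z ^ (j - 1)))^2 = w ^ n"
    by (simp only: norm_minus_cancel norm_power_z)
  have "w ^ n + w ^ (n + 1) + w ^ (n + 2) + w ^ (n + 3) \<le> R * (\<Sum>j=1..n. w ^ (j - 1))"
    using companion_rows_bound[of n a "\<lambda>j. z ^ (j - 1)"]
    unfolding R_def dco_def cco_def bco_def norm_power_z row_norm coeff_norm
    by (simp add: add.commute add.left_commute)
  also have "(\<Sum>j=1..n. w ^ (j - 1)) = (\<Sum>k<n. w ^ k)"
    by (simp add: sum.atLeast1_atMost_eq)
  finally have "w ^ 4 \<le> R + 1"
    using \<open>n \<ge> 1\<close> by (intro power4_le_of_geometric_tail) (simp_all add: w_def)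
  moreover have "cmod z ^ 8 = w ^ 4"
    unfolding w_def by (simp add: power_mult[symmetric])
  ultimately show ?thesis
    using le_powr_inverse_of_power_le[of "cmod z" 8 "R + 1"] unfolding R_def by simp
qed

end
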